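(* Let $\mathbf{Q}\subseteq\mathbb{R}^N$ be a bounded convex set and $\phi:\mathbf{Q}\to\mathbb{R}_{\ge0}$ a density function with $0<\int_{\mathbf{Q}}\phi(\mathbf{q})\,\mathrm{d}\mathbf{q}\le\eta<\infty$. Let $\lambda:\mathbb{R}_{\ge0}\to\mathbb{R}_{\ge0}$ satisfy $\lim_{t\to\infty}\lambda(t)=0$. For a configuration $\mathbf{P}=\{\mathbf{p}_1,\dots,\mathbf{p}_n\}\subset\mathbf{Q}$ define $$H(\mathbf{P})=\frac12\sum_{i=1}^n\int_{\mathbf{Q}}h_i(\mathbf{q},\mathbf{P})\lVert\mathbf{q}-\mathbf{p}_i\rVert^2\phi(\mathbf{q})\,\mathrm{d}\mathbf{q},\qquad \hat H(t,\mathbf{P})=\frac12\sum_{i=1}^n\int_{\mathbf{Q}}h_\lambda\big(t,R_i(\mathbf{q},\mathbf{P})\big)\lVert\mathbf{q}-\mathbf{p}_i\rVert^2\phi(\mathbf{q})\,\mathrm{d}\mathbf{q},$$ where $h_i(\mathbf{q},\mathbf{P})=1$ if $\lVert\mathbf{q}-\mathbf{p}_i\rVert\le\lVert\mathbf{q}-\mathbf{p}_j\rVert$ for all $j$ and $h_i(\mathbf{q},\mathbf{P})=0$ otherwise, $R_i(\mathbf{q},\mathbf{P})=\sum_{l=1}^n\kappa(\lVert\mathbf{q}-\mathbf{p}_i\rVert-\lVert\mathbf{q}-\mathbf{p}_l\rVert)$, and $h_\lambda(t,R)=\exp\{-R/\lambda(t)\}$. Then for any fixed configuration $\mathbf{P}$,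 $$\lim_{t\to\infty}\hat H(t,\mathbf{P})=H(\mathbf{P}).$$
   Context: $\kappa$ is the Heaviside function: $\kappa(c)=1$ for $c>0$, $\kappa(c)=0$ for $c\le0$. $\lVert\cdot\rVert$ is the Euclidean norm. $H$ is the conventional Voronoi-based coverage cost written over the whole environment; $\hat H$ is the proposed time-varying coverage cost. *)

theory Defs
  imports "HOL-Analysis.Analysis"
begin

definition heaviside :: "real \<Rightarrow> real" where
  "heaviside c = (if c > 0 then 1 else 0)"

definition vor_ind :: "nat \<Rightarrow> (nat \<Rightarrow> 'a::euclidean_space) \<Rightarrow> nat \<Rightarrow> 'a \<Rightarrow> real" where
  "vor_ind n p i q = (if (\<forall>j\<in>{1..n}. norm (q - p i) \<le> norm (q - p j)) then 1 else 0)"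

definition rank_fn :: "nat \<Rightarrow> (nat \<Rightarrow> 'a::euclidean_space) \<Rightarrow> nat \<Rightarrow> 'a \<Rightarrow> real" where
  "rank_fn n p i q = (\<Sum>l=1..n. heaviside (norm (q - p i) - norm (q - p l)))"

definition h_lambda :: "(real \<Rightarrow> real) \<Rightarrow> real \<Rightarrow> real \<Rightarrow> real" where
  "h_lambda lam t R = exp (- R / lam t)"

definition cov_H :: "'a::euclidean_space set \<Rightarrow> ('a \<Rightarrow> real) \<Rightarrow> nat \<Rightarrow> (nat \<Rightarrow> 'a) \<Rightarrow> real" where
  "cov_H Q \<phi> n p = (1/2) * (\<Sum>i=1..n. integral Q (\<lambda>q. vor_ind n p i q * (norm (q - p i))\<^sup>2 * \<phi> q))"

definition cov_Hhat :: "'a::euclidean_space set \<Rightarrow> ('a \<Rightarrow> real) \<Rightarrow> (real \<Rightarrow> real) \<Rightarrow> nat \<Rightarrow> (nat \<Rightarrow> 'a) \<Rightarrow> real \<Rightarrow> real" where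
  "cov_Hhat Q \<phi> lam n p t = (1/2) * (\<Sum>i=1..n. integral Q (\<lambda>q. h_lambda lam t (rank_fn n p i q) * (norm (q - p i))\<^sup>2 * \<phi> q))"

end

theory Submission imports Defs begin

text \<open>
  For fixed q the rank R_i(q,P) is 0 exactly when p_i is a nearest generator of q, and it is
  a positive integer otherwise. Hence h_lambda(t, R_i) agrees with the Voronoi indicator h_i
  wherever h_i = 1 and is at most exp(-1/lambda(t)) elsewhere, so the two integrands differ
  by at most exp(-1/lambda(t)) times the integrable weight |q - p_i|^2 phi(q). Since
  lambda(t) tends to 0 from above, this bound, and with it the difference of the integrals,
  tends to 0. Convexity of Q only serves to make Q Lebesgue measurable.
\<close>

lemma tendsto_exp_neg_inverse_zero:
  fixes f :: "'b \<Rightarrow> real"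
  assumes "(f \<longlongrightarrow> 0) F" and "\<forall>\<^sub>F x in F. 0 < f x"
  shows "((\<lambda>x. exp (- 1 / f x)) \<longlongrightarrow> 0) F"
proof -
  have "filterlim f (at_right 0) F"
    using tendsto_imp_filterlim_at_right[OF assms] .
  then have "filterlim (\<lambda>x. inverse (f x)) at_top F"
    by (rule filterlim_compose[OF filterlim_inverse_at_top_right])
  then have "filterlim (\<lambda>x. - inverse (f x)) at_bot F"
    by (simp add: filterlim_uminus_at_bot)
  then show ?thesis
    using filterlim_compose[OF exp_at_bot] by (simp add: divide_inverse)
qed

lemma bounded_measurable_mult_absolutely_integrable:
  fixes f w :: "'a::euclidean_space \<Rightarrow> real"
  assumes "f \<in> borel_measurable borel" and "S \<in> sets lebesgue"
    and "\<And>x. x \<in> S \<Longrightarrow> \<bar>f x\<bar> \<le> B" and "w absolutely_integrable_on S"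
  shows "(\<lambda>x. f x * w x) absolutely_integrable_on S"
proof -
  have "f \<in> borel_measurable (lebesgue_on S)"
    using measurable_comp[OF id_borel_measurable_lebesgue_on assms(1)] by (simp add: o_def)
  moreover have "bounded (f ` S)"
    using assms(3) by (auto simp: bounded_iff)
  ultimately show ?thesis
    using absolutely_integrable_bounded_measurable_product[OF bilinear_times] assms(2,4)
    by blast
qed

lemma tendsto_integral_mult_weight_uniform:
  fixes f :: "'b \<Rightarrow> 'a::euclidean_space \<Rightarrow> real" and g w :: "'a \<Rightarrow> real"
  assumes f_int: "\<forall>\<^sub>F t in F. (\<lambda>x. f t x * w x) integrable_on S"
    and g_int: "(\<lambda>x. g x * w x) integrable_on S"
    and w_int: "w integrable_on S" and w_nonneg: "\<And>x. x \<in> S \<Longrightarrow> 0 \<le> w x"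
    and unif: "\<forall>\<^sub>F t in F. \<forall>x\<in>S. \<bar>f t x - g x\<bar> \<le> e t"
    and e: "(e \<longlongrightarrow> 0) F"
  shows "((\<lambda>t. integral S (\<lambda>x. f t x * w x)) \<longlongrightarrow> integral S (\<lambda>x. g x * w x)) F"
proof -
  have bound: "\<forall>\<^sub>F t in F. norm (integral S (\<lambda>x. f t x * w x) - integral S (\<lambda>x. g x * w x))
                      \<le> e t * integral S w"
    using f_int unif
  proof eventually_elim
    case (elim t)
    have "integral S (\<lambda>x. f t x * w x) - integral S (\<lambda>x. g x * w x)
          = integral S (\<lambda>x. (f t x - g x) * w x)"
      using integral_diff[OF elim(1) g_int] by (simp add: left_diff_distrib)
    also have "norm \<dots> \<le> integral S (\<lambda>x. e t * w x)"
    proof (rule integral_norm_bound_integral)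
      show "(\<lambda>x. (f t x - g x) * w x) integrable_on S"
        using integrable_diff[OF elim(1) g_int] by (simp add: left_diff_distrib)
      show "(\<lambda>x. e t * w x) integrable_on S"
        using integrable_on_cmult_left[OF w_int] by simp
      show "norm ((f t x - g x) * w x) \<le> e t * w x" if "x \<in> S" for x
        using elim(2) that w_nonneg[OF that]
        by (simp add: abs_mult mult_right_mono)
    qed
    finally show ?case by simp
  qed
  have lim: "((\<lambda>t. e t * integral S w) \<longlongrightarrow> 0) F"
    using tendsto_mult_left_zero[OF e] by simp
  have "((\<lambda>t. integral S (\<lambda>x. f t x * w x) - integral S (\<lambda>x. g x * w x))
                      \<longlongrightarrow> 0) F"
    by (rule tendsto_norm_zero_cancel, rule tendsto_sandwich[OF _ bound tendsto_const lim]) simp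
  then show ?thesis
    by (simp add: LIM_zero_iff)
qed

lemma rank_fn_nonneg: "0 \<le> rank_fn n p i q"
  unfolding rank_fn_def heaviside_def by (rule sum_nonneg) auto

lemma rank_fn_eq_0_if_vor_ind: "vor_ind n p i q = 1 \<Longrightarrow> rank_fn n p i q = 0"
  unfolding vor_ind_def rank_fn_def heaviside_def
  by (intro sum.neutral) (auto split: if_splits)

lemma rank_fn_ge_1_if_not_vor_ind:
  assumes "vor_ind n p i q = 0"
  shows "1 \<le> rank_fn n p i q"
proof -
  obtain j where j: "j \<in> {1..n}" "norm (q - p j) < norm (q - p i)"
    using assms by (auto simp: vor_ind_def not_le split: if_splits)
  have "heaviside (norm (q - p i) - norm (q - p j)) \<le> rank_fn n p i q"
    unfolding rank_fn_def
    by (rule member_le_sum[OF j(1)]) (auto simp: heaviside_def)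
  then show ?thesis
    using j(2) by (simp add: heaviside_def)
qed

lemma vor_ind_cases: "vor_ind n p i q = 1 \<or> vor_ind n p i q = 0"
  by (simp add: vor_ind_def)

lemma abs_h_lambda_rank_fn_le_1:
  assumes "0 < lam t"
  shows "\<bar>h_lambda lam t (rank_fn n p i q)\<bar> \<le> 1"
  using rank_fn_nonneg[of n p i q] assms by (simp add: h_lambda_def)

lemma abs_h_lambda_rank_fn_minus_vor_ind_le:
  assumes "0 < lam t"
  shows "\<bar>h_lambda lam t (rank_fn n p i q) - vor_ind n p i q\<bar> \<le> exp (- 1 / lam t)"
  using vor_ind_cases[of n p i q]
proof
  assume "vor_ind n p i q = 1"
  then show ?thesis
    by (simp add: rank_fn_eq_0_if_vor_ind h_lambda_def)
next
  assume vor: "vor_ind n p i q = 0"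
  have "- rank_fn n p i q / lam t \<le> - 1 / lam t"
    using rank_fn_ge_1_if_not_vor_ind[OF vor] assms by (simp add: divide_right_mono)
  then show ?thesis
    using vor by (simp add: h_lambda_def)
qed

lemma h_lambda_rank_fn_measurable:
  "(\<lambda>q. h_lambda lam t (rank_fn n p i q)) \<in> borel_measurable borel"
  unfolding h_lambda_def rank_fn_def heaviside_def by measurable

lemma vor_ind_measurable: "vor_ind n p i \<in> borel_measurable borel"
  unfolding vor_ind_def by measurable

lemma norm_diff_sq_mult_absolutely_integrable:
  fixes \<phi> :: "'a::euclidean_space \<Rightarrow> real"
  assumes "bounded S" and "S \<in> sets lebesgue" and "\<phi> absolutely_integrable_on S"
  shows "(\<lambda>x. (norm (x - c))\<^sup>2 * \<phi> x) absolutely_integrable_on S"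
proof -
  obtain r where r: "\<And>x. x \<in> S \<Longrightarrow> norm x \<le> r"
    using assms(1) bounded_iff by blast
  have "\<bar>(norm (x - c))\<^sup>2\<bar> \<le> (r + norm c)\<^sup>2" if "x \<in> S" for x
    using r[OF that] norm_triangle_ineq4[of x c] by (simp add: power_mono)
  moreover have "(\<lambda>x. (norm (x - c))\<^sup>2) \<in> borel_measurable borel"
    by measurable
  ultimately show ?thesis
    using bounded_measurable_mult_absolutely_integrable assms(2,3) by blast
qed

lemma tendsto_integral_h_lambda_rank_fn:
  fixes Q :: "'a::euclidean_space set"
  assumes "bounded Q" and "Q \<in> sets lebesgue"
    and \<phi>_nonneg: "\<And>q. q \<in> Q \<Longrightarrow> 0 \<le> \<phi> q" and "\<phi> integrable_on Q"
    and lam_pos: "\<forall>\<^sub>F t in at_top. 0 < lam t" and "(lam \<longlongrightarrow> 0) at_top"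
  shows "((\<lambda>t. integral Q (\<lambda>q. h_lambda lam t (rank_fn n p i q) * (norm (q - p i))\<^sup>2 * \<phi> q))
           \<longlongrightarrow> integral Q (\<lambda>q. vor_ind n p i q * (norm (q - p i))\<^sup>2 * \<phi> q)) at_top"
  unfolding mult.assoc
proof (rule tendsto_integral_mult_weight_uniform)
  let ?w = "\<lambda>q. (norm (q - p i))\<^sup>2 * \<phi> q"
  have w: "?w absolutely_integrable_on Q"
    using assms(1,2) nonnegative_absolutely_integrable_1[OF assms(4) \<phi>_nonneg]
    by (rule norm_diff_sq_mult_absolutely_integrable)
  then show "?w integrable_on Q"
    by (simp add: absolutely_integrable_on_def)
  show "0 \<le> ?w q" if "q \<in> Q" for q
    using \<phi>_nonneg[OF that] by simp
  show "\<forall>\<^sub>F t in at_top. (\<lambda>q. h_lambda lam t (rank_fn n p i q) * ?w q) integrable_on Q"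
    using lam_pos
  proof eventually_elim
    case (elim t)
    show ?case
      using w h_lambda_rank_fn_measurable assms(2) abs_h_lambda_rank_fn_le_1[of lam t, OF elim]
      by (intro set_lebesgue_integral_eq_integral(1)
                bounded_measurable_mult_absolutely_integrable[where B = 1 and w = ?w])
  qed
  show "(\<lambda>q. vor_ind n p i q * ?w q) integrable_on Q"
    using w vor_ind_measurable assms(2)
    by (intro set_lebesgue_integral_eq_integral(1)
              bounded_measurable_mult_absolutely_integrable[where B = 1 and w = ?w])
       (auto simp: vor_ind_def)
  show "\<forall>\<^sub>F t in at_top. \<forall>q\<in>Q. \<bar>h_lambda lam t (rank_fn n p i q) - vor_ind n p i q\<bar>
                                  \<le> exp (- 1 / lam t)"
    using lam_pos by eventually_elim (use abs_h_lambda_rank_fn_minus_vor_ind_le in blast)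
  show "((\<lambda>t. exp (- 1 / lam t)) \<longlongrightarrow> 0) at_top"
    using tendsto_exp_neg_inverse_zero assms(6) lam_pos by blast
qed

theorem lemma2:
  fixes Q :: "'a::euclidean_space set" and \<phi> :: "'a \<Rightarrow> real"
    and lam :: "real \<Rightarrow> real" and \<eta> :: real
    and n :: nat and p :: "nat \<Rightarrow> 'a"
  assumes "bounded Q" and "convex Q"
    and "\<And>q. q \<in> Q \<Longrightarrow> \<phi> q \<ge> 0"
    and "\<phi> integrable_on Q"
    and "0 < integral Q \<phi>" and "integral Q \<phi> \<le> \<eta>"
    and "\<And>t. t \<ge> 0 \<Longrightarrow> lam t > 0"
    and "(lam \<longlongrightarrow> 0) at_top"
    and "\<And>i. i \<in> {1..n} \<Longrightarrow> p i \<in> Q"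
  shows "((\<lambda>t. cov_Hhat Q \<phi> lam n p t) \<longlongrightarrow> cov_H Q \<phi> n p) at_top"
proof -
  have "Q \<in> sets lebesgue"
    using measurable_convex assms(1,2) by blast
  moreover have "\<forall>\<^sub>F t in at_top. 0 < lam t"
    using assms(7) by (auto simp: eventually_at_top_linorder)
  ultimately show ?thesis
    unfolding cov_Hhat_def cov_H_def
    by (intro tendsto_mult_left tendsto_sum tendsto_integral_h_lambda_rank_fn assms(1,3,4,8))
qed

end
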